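(* Let $N\ge 2$, $d\ge 1$, $1\le p\le q\le\infty$, and let $\Sigma\subset\mathbb{Z}_N^d$ be a nonempty set for which a $(p,q)$-restriction estimate holds with constant $C_{p,q}>0$. Let $f:\mathbb{Z}_N^d\to\mathbb{C}$ be a nonzero function supported in $E\subset\mathbb{Z}_N^d$ whose Fourier transform $\hat f$ is supported in $\Sigma$. Then $$|E|^{1/p}\cdot|\Sigma|\ \ge\ \frac{N^d}{C_{p,q}}.$$
   Context: $\mathbb{Z}_N$ is the cyclic group of order $N$, $\chi(t)=e^{2\pi i t/N}$ for $t\in\mathbb{Z}_N$, and $x\cdot m=\sum_i x_im_i$ (mod $N$). The Fourier transform of $f:\mathbb{Z}_N^d\to\mathbb{C}$ is $\hat f(m)=N^{-d}\sum_{x\in\mathbb{Z}_N^d}\chi(-x\cdot m)f(x)$, so that $f(x)=\sum_{m}\chi(x\cdot m)\hat f(m)$ and $\sum_x|f(x)|^2=N^d\sum_m|\hat f(m)|^2$. "Supported in $E$" means $f(x)=0$ for $x\notin E$. A $(p,q)$-restriction estimate holds for a nonempty $S\subset\mathbb{Z}_N^d$ with constant $C_{p,q}$ if for every $g:\mathbb{Z}_N^d\to\mathbb{C}$, $$\Big(\frac{1}{|S|}\sum_{m\in S}|\hat g(m)|^q\Big)^{1/q}\le C_{p,q}\,N^{-d}\Big(\sum_{x\in\mathbb{Z}_N^d}|g(x)|^p\Big)^{1/p},$$ where for $q=\infty$ the left side means $\max_{m\in S}|\hat g(m)|$. *)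

theory Defs
  imports "HOL-Analysis.Analysis" "HOL-Library.FuncSet"
begin

text \<open>Z_N^d is modelled as the finite set of extensional functions {..<d} \<rightarrow> {..<N}
  (the coordinate i of x is x i, a residue in {0..N-1}).\<close>

definition ZNd :: "nat \<Rightarrow> nat \<Rightarrow> (nat \<Rightarrow> nat) set" where
  "ZNd N d = ({..<d} \<rightarrow>\<^sub>E {..<N})"

definition chi :: "nat \<Rightarrow> int \<Rightarrow> complex" where
  "chi N t = cis (2 * pi * of_int (t mod int N) / real N)"

definition dotp :: "nat \<Rightarrow> (nat \<Rightarrow> nat) \<Rightarrow> (nat \<Rightarrow> nat) \<Rightarrow> int" where
  "dotp d x m = int (\<Sum>i<d. x i * m i)"

definition fourier :: "nat \<Rightarrow> nat \<Rightarrow> ((nat \<Rightarrow> nat) \<Rightarrow> complex) \<Rightarrow> (nat \<Rightarrow> nat) \<Rightarrow> complex" where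
  "fourier N d f m = (1 / (of_nat N ^ d)) * (\<Sum>x\<in>ZNd N d. chi N (- dotp d x m) * f x)"

definition lp_sum_norm :: "ereal \<Rightarrow> 'a set \<Rightarrow> ('a \<Rightarrow> complex) \<Rightarrow> real" where
  "lp_sum_norm p A g = (if p = \<infinity> then Max ((\<lambda>x. cmod (g x)) ` A)
     else (\<Sum>x\<in>A. cmod (g x) powr real_of_ereal p) powr (1 / real_of_ereal p))"

definition lp_avg_norm :: "ereal \<Rightarrow> 'a set \<Rightarrow> ('a \<Rightarrow> complex) \<Rightarrow> real" where
  "lp_avg_norm q S h = (if q = \<infinity> then Max ((\<lambda>m. cmod (h m)) ` S)
     else ((\<Sum>m\<in>S. cmod (h m) powr real_of_ereal q) / real (card S)) powr (1 / real_of_ereal q))"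

definition restriction_estimate ::
  "nat \<Rightarrow> nat \<Rightarrow> ereal \<Rightarrow> ereal \<Rightarrow> (nat \<Rightarrow> nat) set \<Rightarrow> real \<Rightarrow> bool" where
  "restriction_estimate N d p q S C \<longleftrightarrow>
     (\<forall>g :: (nat \<Rightarrow> nat) \<Rightarrow> complex.
        lp_avg_norm q S (fourier N d g) \<le> C * (1 / real N ^ d) * lp_sum_norm p (ZNd N d) g)"

definition inv_exp :: "ereal \<Rightarrow> real" where
  "inv_exp p = (if p = \<infinity> then 0 else 1 / real_of_ereal p)"

end

theory Submission
  imports Defs
begin

text \<open>Let M be the maximum of |f|. Fourier inversion gives M \<le> (sum over m in \<Sigma> of |f^(m)|); by the
  power-mean inequality this is at most |\<Sigma>| times the L^q-average of f^ over \<Sigma>, which the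
  restriction estimate bounds by C N^-d \<parallel>f\<parallel>_p. As f is supported in E, \<parallel>f\<parallel>_p \<le> |E|^(1/p) M.
  Hence M \<le> |\<Sigma>| C N^-d |E|^(1/p) M, and M > 0 can be cancelled.\<close>

lemma chi_eq_cis:
  assumes "N > 0"
  shows "chi N t = cis (2 * pi * of_int t / real N)"
proof -
  have t: "of_int t = real_of_int (t mod int N) + real N * of_int (t div int N)"
    by (metis of_int_add of_int_mult of_int_of_nat_eq mod_mult_div_eq add.commute mult.commute)
  have "cis (2 * pi * of_int t / real N)
      = cis (2 * pi * of_int (t mod int N) / real N + 2 * pi * of_int (t div int N))"
    using assms by (subst t) (simp add: field_simps)
  also have "\<dots> = chi N t"
    by (simp add: chi_def flip: cis_mult)
  finally show ?thesis by simp
qed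

lemma chi_add: "N > 0 \<Longrightarrow> chi N (a + b) = chi N a * chi N b"
  by (simp add: chi_eq_cis cis_mult add_divide_distrib distrib_left)

lemma chi_zero: "N > 0 \<Longrightarrow> chi N 0 = 1"
  by (simp add: chi_eq_cis)

lemma norm_chi: "N > 0 \<Longrightarrow> norm (chi N t) = 1"
  by (simp add: chi_eq_cis)

lemma chi_sum:
  assumes "finite A" "N > 0"
  shows "chi N (\<Sum>i\<in>A. g i) = (\<Prod>i\<in>A. chi N (g i))"
  using assms(1) by (induction A rule: finite_induct) (auto simp: chi_zero[OF assms(2)] chi_add[OF assms(2)])

lemma chi_power: "N > 0 \<Longrightarrow> chi N a ^ k = chi N (a * int k)"
  by (induction k) (auto simp: chi_zero chi_add distrib_left)

lemma chi_eq_1_iff: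
  assumes "N > 0" "\<bar>a\<bar> < int N"
  shows "chi N a = 1 \<longleftrightarrow> a = 0"
proof
  assume "chi N a = 1"
  then have "cos (2 * pi * of_int a / real N) = 1"
    using assms by (auto simp: chi_eq_cis complex_eq_iff)
  then obtain n :: int where "2 * pi * of_int a / real N = n * 2 * pi"
    by (auto simp: cos_one_2pi_int)
  then have "real_of_int a = real_of_int (int N * n)"
    using assms by (simp add: field_simps)
  then have a: "a = int N * n" by linarith
  show "a = 0"
  proof (rule ccontr)
    assume "a \<noteq> 0"
    then have "int N * 1 \<le> int N * \<bar>n\<bar>" using a by (intro mult_left_mono) auto
    then show False using a assms(2) by (simp add: abs_mult)
  qed
qed (simp add: chi_zero assms)

lemma sum_chi_multiples:
  assumes "N > 0" "\<bar>a\<bar> < int N"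
  shows "(\<Sum>k<N. chi N (a * int k)) = (if a = 0 then of_nat N else 0)"
proof (cases "a = 0")
  case True
  then show ?thesis using assms by (simp add: chi_zero)
next
  case False
  then have "chi N a \<noteq> 1" using chi_eq_1_iff[OF assms] by simp
  moreover have "chi N a ^ N = 1"
    using assms by (simp add: chi_power) (simp add: chi_def)
  ultimately show ?thesis
    using False assms by (simp add: chi_power [symmetric] geometric_sum)
qed

lemma finite_ZNd: "finite (ZNd N d)"
  by (simp add: ZNd_def finite_PiE)

lemma sum_chi_dotp_diff:
  assumes "N > 0" "x \<in> ZNd N d" "y \<in> ZNd N d"
  shows "(\<Sum>m\<in>ZNd N d. chi N (dotp d x m - dotp d y m)) = (if x = y then of_nat N ^ d else 0)"
proof -
  have "(\<Sum>m\<in>ZNd N d. chi N (dotp d x m - dotp d y m))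
      = (\<Sum>m\<in>ZNd N d. \<Prod>i<d. chi N ((int (x i) - int (y i)) * int (m i)))"
  proof (rule sum.cong [OF refl])
    fix m
    have "dotp d x m - dotp d y m = (\<Sum>i<d. (int (x i) - int (y i)) * int (m i))"
      unfolding dotp_def of_nat_sum sum_subtractf [symmetric] left_diff_distrib by simp
    then show "chi N (dotp d x m - dotp d y m) = (\<Prod>i<d. chi N ((int (x i) - int (y i)) * int (m i)))"
      using assms(1) by (simp add: chi_sum)
  qed
  also have "\<dots> = (\<Prod>i<d. \<Sum>k<N. chi N ((int (x i) - int (y i)) * int k))"
    unfolding ZNd_def by (rule prod_sum_PiE [symmetric]) auto
  also have "\<dots> = (\<Prod>i<d. if x i = y i then of_nat N else 0)"
  proof (rule prod.cong [OF refl])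
    fix i assume "i \<in> {..<d}"
    then have "x i < N" "y i < N" using assms unfolding ZNd_def by auto
    then show "(\<Sum>k<N. chi N ((int (x i) - int (y i)) * int k)) = (if x i = y i then of_nat N else 0)"
      using assms(1) by (subst sum_chi_multiples) auto
  qed
  also have "\<dots> = (if x = y then of_nat N ^ d else 0)"
  proof -
    have "x = y \<longleftrightarrow> (\<forall>i<d. x i = y i)"
      using assms unfolding ZNd_def by (auto intro: PiE_ext)
    then show ?thesis by (auto intro: prod_zero)
  qed
  finally show ?thesis .
qed

lemma fourier_inversion:
  assumes "N > 0" "x \<in> ZNd N d"
  shows "(\<Sum>m\<in>ZNd N d. chi N (dotp d x m) * fourier N d f m) = f x"
proof -
  have chi_diff: "chi N (dotp d x m) * chi N (- dotp d y m) = chi N (dotp d x m - dotp d y m)" for m y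
    using chi_add [OF assms(1), of "dotp d x m" "- dotp d y m"] by simp
  have "(\<Sum>m\<in>ZNd N d. chi N (dotp d x m) * fourier N d f m)
      = (1 / of_nat N ^ d) * (\<Sum>m\<in>ZNd N d. \<Sum>y\<in>ZNd N d. f y * chi N (dotp d x m - dotp d y m))"
    unfolding fourier_def sum_distrib_left
    by (intro sum.cong refl) (simp add: chi_diff [symmetric])
  also have "\<dots> = (1 / of_nat N ^ d) * (\<Sum>y\<in>ZNd N d. f y * (\<Sum>m\<in>ZNd N d. chi N (dotp d x m - dotp d y m)))"
    by (simp only: sum_distrib_left) (rule sum.swap)
  also have "\<dots> = (1 / of_nat N ^ d) * (\<Sum>y\<in>ZNd N d. if y = x then f x * of_nat N ^ d else 0)"
    using sum_chi_dotp_diff [OF assms] by (intro arg_cong2 [where f = "(*)"] refl sum.cong) auto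
  also have "\<dots> = f x"
    using assms finite_ZNd by simp
  finally show ?thesis .
qed

lemma norm_le_sum_norm_fourier:
  assumes "N > 0" "x \<in> ZNd N d" "\<Sigma> \<subseteq> ZNd N d"
    and "\<forall>m\<in>ZNd N d. m \<notin> \<Sigma> \<longrightarrow> fourier N d f m = 0"
  shows "cmod (f x) \<le> (\<Sum>m\<in>\<Sigma>. cmod (fourier N d f m))"
proof -
  have "cmod (f x) = cmod (\<Sum>m\<in>ZNd N d. chi N (dotp d x m) * fourier N d f m)"
    using fourier_inversion [OF assms(1,2)] by simp
  also have "\<dots> \<le> (\<Sum>m\<in>ZNd N d. cmod (fourier N d f m))"
    by (rule order_trans [OF norm_sum]) (simp add: norm_mult norm_chi [OF assms(1)])
  also have "\<dots> = (\<Sum>m\<in>\<Sigma>. cmod (fourier N d f m))"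
    using assms(3,4) finite_ZNd by (intro sum.mono_neutral_right) auto
  finally show ?thesis .
qed

lemma convex_on_powr_nonneg:
  assumes "p \<ge> (1::real)"
  shows "convex_on {0..} (\<lambda>x::real. x powr p)"
proof (rule convex_onI)
  fix t x y :: real assume t: "0 < t" "t < 1" and xy: "x \<in> {0..}" "y \<in> {0..}"
  have powr_le: "s powr p \<le> s" if "0 \<le> s" "s \<le> 1" for s :: real
    using powr_mono'[of 1 p s] that assms by simp
  show "((1 - t) *\<^sub>R x + t *\<^sub>R y) powr p \<le> (1 - t) * x powr p + t * y powr p"
  proof (cases "x = 0 \<or> y = 0")
    case True
    then show ?thesis
      using xy t assms powr_le [of t] powr_le [of "1 - t"]
      by (auto simp: powr_mult intro!: mult_right_mono)
  next
    case False
    then have "x \<in> {0<..}" "y \<in> {0<..}" using xy by auto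
    then show ?thesis using convex_onD [OF powr_convex [OF assms], of t x y] t by simp
  qed
qed (simp add: convex_real_interval)

lemma mean_le_power_mean:
  fixes a :: "'a \<Rightarrow> real"
  assumes "finite S" "S \<noteq> {}" "\<And>m. m \<in> S \<Longrightarrow> a m \<ge> 0" "r \<ge> 1"
  shows "(\<Sum>m\<in>S. a m) / card S \<le> ((\<Sum>m\<in>S. a m powr r) / card S) powr (1 / r)"
proof -
  have card_pos: "real (card S) > 0" using assms by (simp add: card_gt_0_iff)
  have "(\<Sum>m\<in>S. (1 / card S) *\<^sub>R a m) powr r \<le> (\<Sum>m\<in>S. (1 / card S) * a m powr r)"
    by (rule convex_on_sum [OF assms(1,2) convex_on_powr_nonneg [OF assms(4)]])
      (use assms card_pos in auto)
  then have jensen: "((\<Sum>m\<in>S. a m) / card S) powr r \<le> (\<Sum>m\<in>S. a m powr r) / card S"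
    by (simp add: sum_distrib_left [symmetric] sum_divide_distrib [symmetric])
  have "(\<Sum>m\<in>S. a m) / card S = (((\<Sum>m\<in>S. a m) / card S) powr r) powr (1 / r)"
    using assms by (simp add: powr_powr sum_nonneg)
  also have "\<dots> \<le> ((\<Sum>m\<in>S. a m powr r) / card S) powr (1 / r)"
    using jensen assms(4) by (intro powr_mono2) auto
  finally show ?thesis .
qed

lemma sum_norm_le_card_mult_lp_avg_norm:
  assumes "finite S" "S \<noteq> {}" "1 \<le> q"
  shows "(\<Sum>m\<in>S. cmod (h m)) \<le> card S * lp_avg_norm q S h"
proof (cases "q = \<infinity>")
  case True
  then have "(\<Sum>m\<in>S. cmod (h m)) \<le> (\<Sum>m\<in>S. lp_avg_norm q S h)"
    unfolding lp_avg_norm_def using assms(1) by (intro sum_mono) auto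
  then show ?thesis by simp
next
  case False
  with assms(3) obtain r where r: "q = ereal r" "r \<ge> 1" by (cases q) auto
  have "(\<Sum>m\<in>S. cmod (h m)) / card S \<le> lp_avg_norm q S h"
    unfolding lp_avg_norm_def using r mean_le_power_mean [OF assms(1,2), of "\<lambda>m. cmod (h m)" r] by simp
  moreover have "real (card S) > 0" using assms by (simp add: card_gt_0_iff)
  ultimately show ?thesis by (simp add: field_simps)
qed

lemma lp_sum_norm_le_support:
  assumes "finite A" "E \<subseteq> A" "E \<noteq> {}" "1 \<le> p"
    and "\<forall>x\<in>A. x \<notin> E \<longrightarrow> g x = 0" "\<forall>x\<in>A. cmod (g x) \<le> M"
  shows "lp_sum_norm p A g \<le> real (card E) powr inv_exp p * M"
proof -
  have card_pos: "real (card E) > 0"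
    using assms(1-3) finite_subset by (fastforce simp: card_gt_0_iff)
  have M_nonneg: "M \<ge> 0"
    using assms(2,3,6) norm_ge_zero order_trans by blast
  show ?thesis
  proof (cases "p = \<infinity>")
    case True
    then show ?thesis
      unfolding lp_sum_norm_def inv_exp_def using assms card_pos by (auto intro: Max.boundedI)
  next
    case False
    with assms(4) obtain r where r: "p = ereal r" "r \<ge> 1" by (cases p) auto
    have "(\<Sum>x\<in>A. cmod (g x) powr r) = (\<Sum>x\<in>E. cmod (g x) powr r)"
      using assms(1,2,5) by (intro sum.mono_neutral_right) auto
    also have "\<dots> \<le> (\<Sum>x\<in>E. M powr r)"
      using assms(2,6) r(2) by (intro sum_mono powr_mono2) auto
    finally have "(\<Sum>x\<in>A. cmod (g x) powr r) powr (1 / r) \<le> (real (card E) * M powr r) powr (1 / r)"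
      using r(2) by (intro powr_mono2) (auto intro: sum_nonneg)
    also have "\<dots> = real (card E) powr (1 / r) * M"
      using card_pos M_nonneg r(2) by (simp add: powr_mult powr_powr)
    finally show ?thesis
      using r unfolding lp_sum_norm_def inv_exp_def by simp
  qed
qed

theorem theorem3:
  fixes N d :: nat and p q :: ereal and \<Sigma> E :: "(nat \<Rightarrow> nat) set"
    and C :: real and f :: "(nat \<Rightarrow> nat) \<Rightarrow> complex"
  assumes "N \<ge> 2" and "d \<ge> 1"
    and "1 \<le> p" and "p \<le> q"
    and "\<Sigma> \<subseteq> ZNd N d" and "\<Sigma> \<noteq> {}"
    and "C > 0" and "restriction_estimate N d p q \<Sigma> C"
    and "E \<subseteq> ZNd N d"
    and "\<forall>x\<in>ZNd N d. x \<notin> E \<longrightarrow> f x = 0"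
    and "\<exists>x\<in>ZNd N d. f x \<noteq> 0"
    and "\<forall>m\<in>ZNd N d. m \<notin> \<Sigma> \<longrightarrow> fourier N d f m = 0"
  shows "real (card E) powr inv_exp p * real (card \<Sigma>) \<ge> real N ^ d / C"
proof -
  define M where "M = Max ((\<lambda>x. cmod (f x)) ` ZNd N d)"
  define K where "K = real (card E) powr inv_exp p"
  have N_pos: "N > 0" using assms(1) by simp
  have M_ge: "\<forall>x\<in>ZNd N d. cmod (f x) \<le> M"
    unfolding M_def using finite_ZNd by auto
  obtain x1 where "x1 \<in> ZNd N d" "f x1 \<noteq> 0" using assms(11) by blast
  then have M_pos: "M > 0" and "E \<noteq> {}"
    using M_ge assms(10) by (metis less_le_trans zero_less_norm_iff, blast)
  have "M \<le> (\<Sum>m\<in>\<Sigma>. cmod (fourier N d f m))"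
    unfolding M_def using norm_le_sum_norm_fourier [OF N_pos _ assms(5,12)] finite_ZNd assms(11)
    by (auto intro: Max.boundedI)
  also have "\<dots> \<le> card \<Sigma> * lp_avg_norm q \<Sigma> (fourier N d f)"
    using assms(3-6) finite_subset [OF assms(5) finite_ZNd]
    by (intro sum_norm_le_card_mult_lp_avg_norm) (auto intro: order_trans)
  also have "\<dots> \<le> card \<Sigma> * (C * (1 / real N ^ d) * lp_sum_norm p (ZNd N d) f)"
    using assms(8) unfolding restriction_estimate_def by (intro mult_left_mono) auto
  also have "\<dots> \<le> card \<Sigma> * (C * (1 / real N ^ d) * (K * M))"
    unfolding K_def using assms(3,7,9,10) M_ge \<open>E \<noteq> {}\<close> finite_ZNd
    by (intro mult_left_mono lp_sum_norm_le_support) auto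
  finally have "M * real N ^ d \<le> M * (K * card \<Sigma> * C)"
    using N_pos by (simp add: field_simps)
  then show ?thesis
    using M_pos assms(7) unfolding K_def by (simp add: divide_le_eq mult_ac)
qed

end
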